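(* Let $\pi:G\times X\to X$ be a continuous $\pi$-uniform action of a topological group $G$ on a Hausdorff non-archimedean uniform space $(X,\mu)$. Then there exist a Hausdorff non-archimedean Boolean topological group $E$, on which $G$ acts continuously by group automorphisms, and a $G$-equivariant map $\alpha:X\to E$ which is a uniform embedding of $(X,\mu)$ into $E$ equipped with its (right $=$ left) group uniformity, such that $\alpha(X)$ is closed in $E$.
   Context: A uniform space $(X,\mu)$ is non-archimedean if $\mu$ has a base consisting of entourages which are equivalence relations. An action $\pi:G\times X\to X$ on a uniform space is $\pi$-uniform if for every entourage $\varepsilon\in\mu$ and $g_0\in G$ there exist $\delta\in\mu$ and a neighborhood $O$ of $g_0$ such that $(gx,gy)\in\varepsilon$ for all $(x,y)\in\delta$ and $g\in O$. A Boolean group is an abelian group with $x+x=0$ for all $x$; a topological group is non-archimedean if it has a local base at the identity consisting of open subgroups. A uniform embedding is an injective map which is a uniform isomorphism onto its image. *)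

theory Defs
  imports "HOL-Analysis.Analysis" "HOL-Algebra.Group"
begin

definition uniformity_on :: "'a set \<Rightarrow> ('a \<times> 'a) set set \<Rightarrow> bool" where
  "uniformity_on X \<mu> \<longleftrightarrow>
     \<mu> \<noteq> {} \<and>
     (\<forall>\<epsilon>\<in>\<mu>. Id_on X \<subseteq> \<epsilon> \<and> \<epsilon> \<subseteq> X \<times> X) \<and>
     (\<forall>\<epsilon>\<in>\<mu>. \<forall>\<delta>. \<epsilon> \<subseteq> \<delta> \<and> \<delta> \<subseteq> X \<times> X \<longrightarrow> \<delta> \<in> \<mu>) \<and>
     (\<forall>\<epsilon>\<in>\<mu>. \<forall>\<delta>\<in>\<mu>. \<epsilon> \<inter> \<delta> \<in> \<mu>) \<and>
     (\<forall>\<epsilon>\<in>\<mu>. \<epsilon>\<inverse> \<in> \<mu>) \<and>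
     (\<forall>\<epsilon>\<in>\<mu>. \<exists>\<delta>\<in>\<mu>. \<delta> O \<delta> \<subseteq> \<epsilon>)"

definition hausdorff_uniformity :: "'a set \<Rightarrow> ('a \<times> 'a) set set \<Rightarrow> bool" where
  "hausdorff_uniformity X \<mu> \<longleftrightarrow> (\<forall>x\<in>X. \<forall>y\<in>X. x \<noteq> y \<longrightarrow> (\<exists>\<epsilon>\<in>\<mu>. (x, y) \<notin> \<epsilon>))"

definition non_archimedean_uniformity :: "'a set \<Rightarrow> ('a \<times> 'a) set set \<Rightarrow> bool" where
  "non_archimedean_uniformity X \<mu> \<longleftrightarrow> (\<forall>\<epsilon>\<in>\<mu>. \<exists>\<delta>\<in>\<mu>. \<delta> \<subseteq> \<epsilon> \<and> equiv X \<delta>)"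

definition uniform_topology :: "'a set \<Rightarrow> ('a \<times> 'a) set set \<Rightarrow> 'a topology" where
  "uniform_topology X \<mu> =
     topology (\<lambda>U. U \<subseteq> X \<and> (\<forall>x\<in>U. \<exists>\<epsilon>\<in>\<mu>. \<epsilon> `` {x} \<subseteq> U))"

definition uniformly_continuous_map ::
  "'a set \<Rightarrow> ('a \<times> 'a) set set \<Rightarrow> ('b \<times> 'b) set set \<Rightarrow> ('a \<Rightarrow> 'b) \<Rightarrow> bool" where
  "uniformly_continuous_map X \<mu> \<nu> f \<longleftrightarrow>
     (\<forall>\<epsilon>\<in>\<nu>. \<exists>\<delta>\<in>\<mu>. \<forall>x\<in>X. \<forall>y\<in>X. (x, y) \<in> \<delta> \<longrightarrow> (f x, f y) \<in> \<epsilon>)"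

definition uniform_embedding ::
  "'a set \<Rightarrow> ('a \<times> 'a) set set \<Rightarrow> 'b set \<Rightarrow> ('b \<times> 'b) set set \<Rightarrow> ('a \<Rightarrow> 'b) \<Rightarrow> bool" where
  "uniform_embedding X \<mu> Y \<nu> f \<longleftrightarrow>
     inj_on f X \<and> f ` X \<subseteq> Y \<and>
     uniformly_continuous_map X \<mu> \<nu> f \<and>
     (\<forall>\<epsilon>\<in>\<mu>. \<exists>\<delta>\<in>\<nu>. \<forall>x\<in>X. \<forall>y\<in>X. (f x, f y) \<in> \<delta> \<longrightarrow> (x, y) \<in> \<epsilon>)"

definition topological_group :: "('g, 'm) monoid_scheme \<Rightarrow> 'g topology \<Rightarrow> bool" where
  "topological_group G T \<longleftrightarrow>
     group G \<and> topspace T = carrier G \<and>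
     continuous_map (prod_topology T T) T (\<lambda>(g, h). g \<otimes>\<^bsub>G\<^esub> h) \<and>
     continuous_map T T (\<lambda>g. inv\<^bsub>G\<^esub> g)"

definition non_archimedean_group :: "('g, 'm) monoid_scheme \<Rightarrow> 'g topology \<Rightarrow> bool" where
  "non_archimedean_group G T \<longleftrightarrow>
     (\<forall>U. openin T U \<and> \<one>\<^bsub>G\<^esub> \<in> U \<longrightarrow> (\<exists>H. subgroup H G \<and> openin T H \<and> H \<subseteq> U))"

definition boolean_group :: "('g, 'm) monoid_scheme \<Rightarrow> bool" where
  "boolean_group G \<longleftrightarrow> comm_group G \<and> (\<forall>x\<in>carrier G. x \<otimes>\<^bsub>G\<^esub> x = \<one>\<^bsub>G\<^esub>)"

text \<open>Right group uniformity: entourages contain some \<open>{(x,y). y x\<^sup>-\<^sup>1 \<in> U}\<close>, \<open>U\<close> an open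
  neighbourhood of the identity (for abelian groups it coincides with the left one).\<close>
definition right_group_uniformity :: "('g, 'm) monoid_scheme \<Rightarrow> 'g topology \<Rightarrow> ('g \<times> 'g) set set" where
  "right_group_uniformity G T =
     {\<epsilon>. \<epsilon> \<subseteq> carrier G \<times> carrier G \<and>
          (\<exists>U. openin T U \<and> \<one>\<^bsub>G\<^esub> \<in> U \<and>
               {(x, y). x \<in> carrier G \<and> y \<in> carrier G \<and> y \<otimes>\<^bsub>G\<^esub> inv\<^bsub>G\<^esub> x \<in> U} \<subseteq> \<epsilon>)}"

definition group_action_on :: "('g, 'm) monoid_scheme \<Rightarrow> 'x set \<Rightarrow> ('g \<Rightarrow> 'x \<Rightarrow> 'x) \<Rightarrow> bool" where
  "group_action_on G X \<pi> \<longleftrightarrow>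
     (\<forall>g\<in>carrier G. \<forall>x\<in>X. \<pi> g x \<in> X) \<and>
     (\<forall>x\<in>X. \<pi> \<one>\<^bsub>G\<^esub> x = x) \<and>
     (\<forall>g\<in>carrier G. \<forall>h\<in>carrier G. \<forall>x\<in>X. \<pi> (g \<otimes>\<^bsub>G\<^esub> h) x = \<pi> g (\<pi> h x))"

definition continuous_action ::
  "('g, 'm) monoid_scheme \<Rightarrow> 'g topology \<Rightarrow> 'x topology \<Rightarrow> ('g \<Rightarrow> 'x \<Rightarrow> 'x) \<Rightarrow> bool" where
  "continuous_action G T S \<pi> \<longleftrightarrow>
     group_action_on G (topspace S) \<pi> \<and>
     continuous_map (prod_topology T S) S (\<lambda>(g, x). \<pi> g x)"

definition pi_uniform ::
  "('g, 'm) monoid_scheme \<Rightarrow> 'g topology \<Rightarrow> 'x set \<Rightarrow> ('x \<times> 'x) set set \<Rightarrow> ('g \<Rightarrow> 'x \<Rightarrow> 'x) \<Rightarrow> bool" where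
  "pi_uniform G T X \<mu> \<pi> \<longleftrightarrow>
     (\<forall>\<epsilon>\<in>\<mu>. \<forall>g0\<in>carrier G. \<exists>\<delta>\<in>\<mu>. \<exists>V. openin T V \<and> g0 \<in> V \<and>
        (\<forall>(x, y)\<in>\<delta>. \<forall>g\<in>V. (\<pi> g x, \<pi> g y) \<in> \<epsilon>))"

end

theory Submission
  imports Defs
begin

text \<open>
  Let \<open>Y\<close> be a set carrying a directed,
  separating family \<open>B\<close> of equivalence relations.  The finite subsets of \<open>Y\<close> form a Boolean
  group under symmetric difference, the free Boolean group over \<open>Y\<close>.  For \<open>e \<in> B\<close> the finite
  sets meeting every \<open>e\<close>-saturated set in an even number of points form a subgroup; declaring
  these subgroups a neighbourhood base of \<open>{}\<close> yields a Hausdorff non-archimedean Boolean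
  topological group \<open>E\<close>.  In \<open>E\<close> the generators \<open>{x}, {y}\<close> differ by an element of the
  \<open>e\<close>-subgroup iff \<open>(x, y) \<in> e\<close>, so \<open>y \<mapsto> {y}\<close> is a uniform embedding; a finite set
  separated by some \<open>e\<close> has a neighbourhood without generators, so the generators form a
  closed set.  A group action on \<open>Y\<close> whose orbit maps are continuous and which is
  equicontinuous locally in \<open>G\<close> extends to a continuous action on \<open>E\<close> by automorphisms.
\<close>

definition sd :: "'a set \<Rightarrow> 'a set \<Rightarrow> 'a set" where
  "sd A B = (A - B) \<union> (B - A)"

lemma sd_assoc: "sd (sd A B) C = sd A (sd B C)"
  unfolding sd_def by auto

lemma sd_comm: "sd A B = sd B A"
  unfolding sd_def by auto

lemma sd_empty [simp]: "sd {} A = A" "sd A {} = A" "sd A A = {}"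
  unfolding sd_def by auto

lemma sd_cancel [simp]: "sd A (sd A B) = B"
  unfolding sd_def by auto

lemma sd_Int: "sd A B \<inter> C = sd (A \<inter> C) (B \<inter> C)"
  unfolding sd_def by auto

lemma finite_sd [simp]: "finite A \<Longrightarrow> finite B \<Longrightarrow> finite (sd A B)"
  unfolding sd_def by auto

lemma sd_subset: "A \<subseteq> Y \<Longrightarrow> B \<subseteq> Y \<Longrightarrow> sd A B \<subseteq> Y"
  unfolding sd_def by auto

lemma image_sd:
  assumes "inj_on f Y" "A \<subseteq> Y" "B \<subseteq> Y"
  shows "f ` sd A B = sd (f ` A) (f ` B)"
  unfolding sd_def image_Un
  using inj_on_image_set_diff[OF assms(1)] assms(2,3) by auto

lemma even_card_sd:
  assumes "finite A" "finite B"
  shows "even (card (sd A B)) \<longleftrightarrow> (even (card A) \<longleftrightarrow> even (card B))"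
proof -
  have "card A = card (A - B) + card (A \<inter> B)"
    using card_Int_Diff[OF assms(1), of B] by simp
  moreover have "card B = card (B - A) + card (A \<inter> B)"
    using card_Int_Diff[OF assms(2), of A] by (simp add: Int_commute)
  moreover have "card (sd A B) = card (A - B) + card (B - A)"
    unfolding sd_def using assms by (subst card_Un_disjoint) auto
  ultimately show ?thesis by presburger
qed

lemma card_image_Int:
  assumes "inj_on f S"
  shows "card (f ` S \<inter> C) = card {x \<in> S. f x \<in> C}"
proof -
  have "f ` S \<inter> C = f ` {x \<in> S. f x \<in> C}" by auto
  thus ?thesis using card_image[OF inj_on_subset[OF assms]] by auto
qed

section \<open>Even subgroups of the free Boolean group\<close>

definition saturated :: "'p set \<Rightarrow> ('p \<times> 'p) set \<Rightarrow> 'p set \<Rightarrow> bool" where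
  "saturated Y e C \<longleftrightarrow> C \<subseteq> Y \<and> (\<forall>x y. (x, y) \<in> e \<longrightarrow> x \<in> C \<longrightarrow> y \<in> C)"

text \<open>The finite subsets of \<open>Y\<close> meeting every \<open>e\<close>-saturated set evenly; for an equivalence
  \<open>e\<close> these are the sets meeting every \<open>e\<close>-class evenly.\<close>
definition even_sets :: "'p set \<Rightarrow> ('p \<times> 'p) set \<Rightarrow> 'p set set" where
  "even_sets Y e =
     {S. finite S \<and> S \<subseteq> Y \<and> (\<forall>C. saturated Y e C \<longrightarrow> even (card (S \<inter> C)))}"

lemma even_sets_empty: "{} \<in> even_sets Y e"
  unfolding even_sets_def by auto

lemma even_sets_sd:
  assumes "A \<in> even_sets Y e" "B \<in> even_sets Y e"
  shows "sd A B \<in> even_sets Y e"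
proof -
  have "even (card (sd A B \<inter> C))" if "saturated Y e C" for C
    unfolding sd_Int using assms that even_card_sd[of "A \<inter> C" "B \<inter> C"]
    unfolding even_sets_def by auto
  thus ?thesis using assms sd_subset[of A Y B] unfolding even_sets_def by auto
qed

text \<open>Finer relations have more saturated sets, hence fewer even sets.\<close>
lemma even_sets_mono:
  assumes "e' \<subseteq> e"
  shows "even_sets Y e' \<subseteq> even_sets Y e"
proof -
  have "saturated Y e' C" if "saturated Y e C" for C
    using assms that unfolding saturated_def by blast
  thus ?thesis unfolding even_sets_def by blast
qed

lemma saturated_class: "equiv Y e \<Longrightarrow> a \<in> Y \<Longrightarrow> saturated Y e (e `` {a})"
  unfolding saturated_def equiv_def refl_on_def trans_def by blast

lemma even_class:
  assumes "equiv Y e" "A \<in> even_sets Y e" "a \<in> Y"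
  shows "even (card (A \<inter> e `` {a}))"
  using assms(2) saturated_class[OF assms(1,3)] unfolding even_sets_def by blast

lemma pair_even_iff:
  assumes "equiv Y e" "x \<in> Y" "y \<in> Y"
  shows "sd {y} {x} \<in> even_sets Y e \<longleftrightarrow> (x, y) \<in> e"
proof
  assume even: "sd {y} {x} \<in> even_sets Y e"
  show "(x, y) \<in> e"
  proof (rule ccontr)
    assume "(x, y) \<notin> e"
    hence "sd {y} {x} \<inter> e `` {x} = {x}"
      using assms unfolding sd_def equiv_def refl_on_def by auto
    thus False using even_class[OF assms(1) even assms(2)] by simp
  qed
next
  assume xy: "(x, y) \<in> e"
  have "even (card (sd {y} {x} \<inter> C))" if C: "saturated Y e C" for C
  proof -
    have "x \<in> C \<longleftrightarrow> y \<in> C" using C xy assms(1) unfolding saturated_def equiv_def sym_def by blast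
    thus ?thesis by (cases "x = y"; cases "x \<in> C") (auto simp: sd_def insert_Diff_if)
  qed
  thus "sd {y} {x} \<in> even_sets Y e" using assms(2,3) unfolding even_sets_def sd_def by auto
qed

definition separated_by :: "('p \<times> 'p) set \<Rightarrow> 'p set \<Rightarrow> bool" where
  "separated_by e S \<longleftrightarrow> (\<forall>x\<in>S. \<forall>y\<in>S. x \<noteq> y \<longrightarrow> (x, y) \<notin> e)"

lemma separated_class:
  assumes "equiv Y e" "S \<subseteq> Y" "separated_by e S" "c \<in> S"
  shows "S \<inter> e `` {c} = {c}"
  using assms unfolding separated_by_def equiv_def refl_on_def by auto

lemma separated_not_even:
  assumes "equiv Y e" "S \<subseteq> Y" "separated_by e S" "S \<noteq> {}"
  shows "S \<notin> even_sets Y e"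
proof
  assume "S \<in> even_sets Y e"
  moreover obtain c where "c \<in> S" using assms(4) by blast
  ultimately show False
    using even_class[OF assms(1)] separated_class[OF assms(1-3)] assms(2) by fastforce
qed

text \<open>If a separated set \<open>S\<close> differs from a generator \<open>{z}\<close> by an even set, then \<open>S\<close> itself
  is a singleton: each point of \<open>S\<close> is \<open>e\<close>-equivalent to \<open>z\<close>, and there is at least one.\<close>
lemma separated_sd_singleton:
  assumes e: "equiv Y e" and S: "S \<subseteq> Y" "separated_by e S" and z: "z \<in> Y"
    and even: "sd S {z} \<in> even_sets Y e"
  shows "\<exists>c. S = {c}"
proof -
  have related: "(c, z) \<in> e" if c: "c \<in> S" for c
  proof (rule ccontr)
    assume "(c, z) \<notin> e"
    hence "sd S {z} \<inter> e `` {c} = {c}"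
      unfolding sd_Int separated_class[OF e S c] by auto
    moreover have "c \<in> Y" using S c by blast
    ultimately show False using even_class[OF e even, of c] by simp
  qed
  have "S \<noteq> {}"
  proof
    assume "S = {}"
    hence "sd S {z} \<inter> e `` {z} = {z}" using e z unfolding equiv_def refl_on_def by auto
    thus False using even_class[OF e even z] by simp
  qed
  then obtain c where c: "c \<in> S" by blast
  have "a = b" if ab: "a \<in> S" "b \<in> S" for a b
  proof (rule ccontr)
    assume "a \<noteq> b"
    have "(a, z) \<in> e" "(z, b) \<in> e"
      using related[OF ab(1)] related[OF ab(2)] e unfolding equiv_def sym_def by blast+
    hence "(a, b) \<in> e" using e unfolding equiv_def trans_def by blast
    thus False using S(2) ab \<open>a \<noteq> b\<close> unfolding separated_by_def by blast
  qed
  hence "S = {c}" using c by blast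
  thus ?thesis by blast
qed

lemma sd_images_even:
  assumes e: "sym e" and S: "finite S" and inj: "inj_on f S" "inj_on h S"
    and Y: "f ` S \<subseteq> Y" "h ` S \<subseteq> Y" and close: "\<forall>x\<in>S. (f x, h x) \<in> e"
  shows "sd (f ` S) (h ` S) \<in> even_sets Y e"
proof -
  have "even (card (sd (f ` S) (h ` S) \<inter> C))" if C: "saturated Y e C" for C
  proof -
    have "{x \<in> S. f x \<in> C} = {x \<in> S. h x \<in> C}"
      using close C e unfolding saturated_def sym_def by blast
    hence "card (f ` S \<inter> C) = card (h ` S \<inter> C)"
      using card_image_Int[OF inj(1)] card_image_Int[OF inj(2)] by simp
    moreover have "finite (f ` S \<inter> C)" "finite (h ` S \<inter> C)" using S by auto
    ultimately show ?thesis unfolding sd_Int using even_card_sd[of "f ` S \<inter> C" "h ` S \<inter> C"] by simp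
  qed
  thus ?thesis using S Y sd_subset[OF Y] unfolding even_sets_def by auto
qed

text \<open>An injective self-map of \<open>Y\<close> carrying \<open>d\<close> into \<open>e\<close> carries \<open>d\<close>-even sets to
  \<open>e\<close>-even sets, since preimages of \<open>e\<close>-saturated sets are \<open>d\<close>-saturated.\<close>
lemma even_sets_image:
  assumes inj: "inj_on f Y" and maps: "f ` Y \<subseteq> Y" and d: "d \<subseteq> Y \<times> Y"
    and resp: "\<forall>x y. (x, y) \<in> d \<longrightarrow> (f x, f y) \<in> e" and A: "A \<in> even_sets Y d"
  shows "f ` A \<in> even_sets Y e"
proof -
  have AY: "finite A" "A \<subseteq> Y" using A unfolding even_sets_def by auto
  have "even (card (f ` A \<inter> C))" if C: "saturated Y e C" for C
  proof -
    have "saturated Y d {x \<in> Y. f x \<in> C}"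
      using C d resp unfolding saturated_def by blast
    hence "even (card (A \<inter> {x \<in> Y. f x \<in> C}))" using A unfolding even_sets_def by blast
    moreover have "A \<inter> {x \<in> Y. f x \<in> C} = {x \<in> A. f x \<in> C}" using AY by auto
    ultimately show ?thesis using card_image_Int[OF inj_on_subset[OF inj AY(2)]] by simp
  qed
  thus ?thesis using AY maps unfolding even_sets_def by auto
qed

lemma finite_common_nbhd:
  assumes "finite S" "g0 \<in> topspace T"
    and "\<forall>x\<in>S. \<exists>V. openin T V \<and> g0 \<in> V \<and> (\<forall>g\<in>V. P g x)"
  shows "\<exists>V. openin T V \<and> g0 \<in> V \<and> (\<forall>g\<in>V. \<forall>x\<in>S. P g x)"
  using assms
proof (induction S rule: finite_induct)
  case empty
  then show ?case by (intro exI[of _ "topspace T"]) auto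
next
  case (insert x F)
  then obtain V where V: "openin T V" "g0 \<in> V" "\<forall>g\<in>V. \<forall>x\<in>F. P g x" by auto
  obtain V' where V': "openin T V'" "g0 \<in> V'" "\<forall>g\<in>V'. P g x" using insert.prems by auto
  show ?case using V V' by (intro exI[of _ "V \<inter> V'"]) auto
qed

lemma uniformity_onD:
  assumes "uniformity_on X \<mu>"
  shows "\<mu> \<noteq> {}" "\<epsilon> \<in> \<mu> \<Longrightarrow> \<epsilon> \<subseteq> X \<times> X" "\<epsilon> \<in> \<mu> \<Longrightarrow> \<delta> \<in> \<mu> \<Longrightarrow> \<epsilon> \<inter> \<delta> \<in> \<mu>"
proof -
  note u = assms[unfolded uniformity_on_def]
  show "\<mu> \<noteq> {}" using u by (elim conjE) assumption
  have "\<forall>\<epsilon>\<in>\<mu>. Id_on X \<subseteq> \<epsilon> \<and> \<epsilon> \<subseteq> X \<times> X" using u by (elim conjE) assumption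
  thus "\<epsilon> \<in> \<mu> \<Longrightarrow> \<epsilon> \<subseteq> X \<times> X" by blast
  have "\<forall>\<epsilon>\<in>\<mu>. \<forall>\<delta>\<in>\<mu>. \<epsilon> \<inter> \<delta> \<in> \<mu>" using u by (elim conjE) assumption
  thus "\<epsilon> \<in> \<mu> \<Longrightarrow> \<delta> \<in> \<mu> \<Longrightarrow> \<epsilon> \<inter> \<delta> \<in> \<mu>" by blast
qed

lemma openin_uniform_topology:
  assumes "uniformity_on X \<mu>"
  shows "openin (uniform_topology X \<mu>) U \<longleftrightarrow> U \<subseteq> X \<and> (\<forall>x\<in>U. \<exists>\<epsilon>\<in>\<mu>. \<epsilon> `` {x} \<subseteq> U)"
proof -
  define openU where "openU U \<longleftrightarrow> U \<subseteq> X \<and> (\<forall>x\<in>U. \<exists>\<epsilon>\<in>\<mu>. \<epsilon> `` {x} \<subseteq> U)" for U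
  have inter: "openU (S \<inter> S')" if "openU S" "openU S'" for S S'
  proof -
    have "\<exists>\<epsilon>\<in>\<mu>. \<epsilon> `` {x} \<subseteq> S \<inter> S'" if x: "x \<in> S \<inter> S'" for x
    proof -
      obtain a b where ab: "a \<in> \<mu>" "a `` {x} \<subseteq> S" "b \<in> \<mu>" "b `` {x} \<subseteq> S'"
        using \<open>openU S\<close> \<open>openU S'\<close> x unfolding openU_def by blast
      have "(a \<inter> b) `` {x} \<subseteq> S \<inter> S'" using ab(2,4) by blast
      thus ?thesis using uniformity_onD(3)[OF assms ab(1,3)] by blast
    qed
    thus ?thesis using that unfolding openU_def by blast
  qed
  have union: "openU (\<Union>K)" if K: "\<forall>U\<in>K. openU U" for K
  proof -
    have "\<exists>\<epsilon>\<in>\<mu>. \<epsilon> `` {x} \<subseteq> \<Union>K" if x: "x \<in> \<Union>K" for x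
    proof -
      obtain U where U: "U \<in> K" "x \<in> U" using x by blast
      then obtain \<epsilon> where "\<epsilon> \<in> \<mu>" "\<epsilon> `` {x} \<subseteq> U" using K unfolding openU_def by blast
      thus ?thesis using U(1) by blast
    qed
    thus ?thesis using K unfolding openU_def by blast
  qed
  have "istopology openU" unfolding istopology_def using inter union by blast
  thus ?thesis unfolding uniform_topology_def openU_def[abs_def] by simp
qed

lemma topspace_uniform_topology:
  assumes "uniformity_on X \<mu>"
  shows "topspace (uniform_topology X \<mu>) = X"
proof -
  obtain \<epsilon> where "\<epsilon> \<in> \<mu>" using uniformity_onD(1)[OF assms] by blast
  moreover have "\<epsilon> \<subseteq> X \<times> X" using uniformity_onD(2)[OF assms calculation] .
  ultimately have "openin (uniform_topology X \<mu>) X" unfolding openin_uniform_topology[OF assms] by blast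
  hence "X \<subseteq> topspace (uniform_topology X \<mu>)" by (rule openin_subset)
  moreover have "topspace (uniform_topology X \<mu>) \<subseteq> X"
    using openin_topspace[of "uniform_topology X \<mu>"] unfolding openin_uniform_topology[OF assms] by blast
  ultimately show ?thesis by blast
qed

lemma equiv_class_open:
  assumes "uniformity_on X \<mu>" "e \<in> \<mu>" "equiv X e"
  shows "openin (uniform_topology X \<mu>) (e `` {a})"
  unfolding openin_uniform_topology[OF assms(1)]
proof (intro conjI ballI)
  show "e `` {a} \<subseteq> X" using assms(3) unfolding equiv_def refl_on_def by auto
  fix z assume "z \<in> e `` {a}"
  hence "e `` {z} \<subseteq> e `` {a}" using assms(3) unfolding equiv_def trans_def by blast
  thus "\<exists>\<epsilon>\<in>\<mu>. \<epsilon> `` {z} \<subseteq> e `` {a}" using assms(2) by blast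
qed

lemma orbit_map_locally_constant:
  assumes un: "uniformity_on X \<mu>"
    and act: "continuous_action G T (uniform_topology X \<mu>) \<pi>"
    and topT: "topspace T = carrier G"
    and e: "e \<in> \<mu>" "equiv X e" and g0: "g0 \<in> carrier G" and a: "a \<in> X"
  shows "\<exists>V. openin T V \<and> g0 \<in> V \<and> (\<forall>g\<in>V. (\<pi> g a, \<pi> g0 a) \<in> e)"
proof -
  let ?UT = "uniform_topology X \<mu>"
  have cm: "continuous_map (prod_topology T ?UT) ?UT (\<lambda>(g, x). \<pi> g x)"
    and ga: "group_action_on G X \<pi>"
    using act topspace_uniform_topology[OF un] unfolding continuous_action_def by auto
  have pair: "continuous_map T (prod_topology T ?UT) (\<lambda>g. (g, a))"
    using a topspace_uniform_topology[OF un] by (intro continuous_map_pairedI) auto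
  have orbit: "continuous_map T ?UT (\<lambda>g. \<pi> g a)"
    using continuous_map_compose[OF pair cm] by (simp add: o_def)
  let ?V = "{g \<in> topspace T. \<pi> g a \<in> e `` {\<pi> g0 a}}"
  have "openin T ?V"
    using orbit equiv_class_open[OF un e] unfolding continuous_map_def by blast
  moreover have "\<pi> g0 a \<in> X" using ga g0 a unfolding group_action_on_def by auto
  hence "g0 \<in> ?V" using g0 topT e(2) unfolding equiv_def refl_on_def by auto
  moreover have "\<forall>g\<in>?V. (\<pi> g a, \<pi> g0 a) \<in> e"
    using e(2) unfolding equiv_def sym_def by auto
  ultimately show ?thesis by blast
qed

section \<open>The free Boolean group over a set with a base of equivalence relations\<close>

locale boolean_envelope =
  fixes G :: "('g, 'm) monoid_scheme" and T :: "'g topology"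
    and Y :: "'p set" and B :: "('p \<times> 'p) set set" and \<rho> :: "'g \<Rightarrow> 'p \<Rightarrow> 'p"
  assumes topological_group: "topological_group G T"
    and base_nonempty: "B \<noteq> {}"
    and base_equiv: "e \<in> B \<Longrightarrow> equiv Y e"
    and base_directed: "e \<in> B \<Longrightarrow> e' \<in> B \<Longrightarrow> \<exists>e''\<in>B. e'' \<subseteq> e \<inter> e'"
    and base_separating: "x \<in> Y \<Longrightarrow> y \<in> Y \<Longrightarrow> x \<noteq> y \<Longrightarrow> \<exists>e\<in>B. (x, y) \<notin> e"
    and action: "group_action_on G Y \<rho>"
    and orbit_continuous: "e \<in> B \<Longrightarrow> g0 \<in> carrier G \<Longrightarrow> x \<in> Y \<Longrightarrow>
          \<exists>V. openin T V \<and> g0 \<in> V \<and> (\<forall>g\<in>V. (\<rho> g x, \<rho> g0 x) \<in> e)"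
    and equicontinuous: "e \<in> B \<Longrightarrow> g0 \<in> carrier G \<Longrightarrow>
          \<exists>d\<in>B. \<exists>V. openin T V \<and> g0 \<in> V \<and> (\<forall>g\<in>V. \<forall>x y. (x, y) \<in> d \<longrightarrow> (\<rho> g x, \<rho> g y) \<in> e)"
begin

definition Fin :: "'p set set" where
  "Fin = {S. finite S \<and> S \<subseteq> Y}"

definition E :: "'p set monoid" where
  "E = \<lparr>carrier = Fin, mult = sd, one = {}\<rparr>"

definition coset :: "'p set \<Rightarrow> ('p \<times> 'p) set \<Rightarrow> 'p set set" where
  "coset S e = sd S ` even_sets Y e"

definition openE :: "'p set set \<Rightarrow> bool" where
  "openE U \<longleftrightarrow> U \<subseteq> Fin \<and> (\<forall>S\<in>U. \<exists>e\<in>B. coset S e \<subseteq> U)"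

definition TE :: "'p set topology" where
  "TE = topology openE"

definition \<tau> :: "'g \<Rightarrow> 'p set \<Rightarrow> 'p set" where
  "\<tau> g S = \<rho> g ` S"

lemma E_simps [simp]: "carrier E = Fin" "mult E = sd" "one E = {}"
  unfolding E_def by auto

lemma sd_Fin: "S \<in> Fin \<Longrightarrow> A \<in> Fin \<Longrightarrow> sd S A \<in> Fin"
  unfolding Fin_def using sd_subset by auto

lemma even_sets_Fin: "even_sets Y e \<subseteq> Fin"
  unfolding even_sets_def Fin_def by auto

lemma coset_iff: "S' \<in> coset S e \<longleftrightarrow> sd S S' \<in> even_sets Y e"
proof
  assume "S' \<in> coset S e"
  then obtain A where "A \<in> even_sets Y e" "S' = sd S A" unfolding coset_def by blast
  thus "sd S S' \<in> even_sets Y e" by simp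
next
  assume "sd S S' \<in> even_sets Y e"
  moreover have "S' = sd S (sd S S')" by simp
  ultimately show "S' \<in> coset S e" unfolding coset_def by blast
qed

lemma coset_mem: "S \<in> coset S e"
  unfolding coset_iff using even_sets_empty by simp

lemma coset_Fin: "S \<in> Fin \<Longrightarrow> coset S e \<subseteq> Fin"
  unfolding coset_def using even_sets_Fin sd_Fin by blast

lemma coset_mono: "e' \<subseteq> e \<Longrightarrow> coset S e' \<subseteq> coset S e"
  unfolding coset_def using even_sets_mono by blast

lemma coset_sd:
  assumes "S' \<in> coset S e" "R' \<in> coset R e"
  shows "sd S' R' \<in> coset (sd S R) e"
proof -
  have "sd (sd S R) (sd S' R') = sd (sd S S') (sd R R')" unfolding sd_def by auto
  thus ?thesis unfolding coset_iff using even_sets_sd[OF assms[unfolded coset_iff]] by simp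
qed

lemma coset_coset:
  assumes "S' \<in> coset S e"
  shows "coset S' e \<subseteq> coset S e"
proof
  fix S'' assume "S'' \<in> coset S' e"
  hence "sd S S' \<in> even_sets Y e" "sd S' S'' \<in> even_sets Y e"
    using assms by (simp_all add: coset_iff)
  hence "sd (sd S S') (sd S' S'') \<in> even_sets Y e" by (rule even_sets_sd)
  moreover have "sd (sd S S') (sd S' S'') = sd S S''" unfolding sd_def by auto
  ultimately show "S'' \<in> coset S e" unfolding coset_iff by simp
qed

lemma istopology_openE: "istopology openE"
proof -
  have inter: "openE (U \<inter> V)" if U: "openE U" and V: "openE V" for U V
  proof -
    have "\<exists>e\<in>B. coset S e \<subseteq> U \<inter> V" if S: "S \<in> U \<inter> V" for S
    proof -
      obtain e where e: "e \<in> B" "coset S e \<subseteq> U" using U S unfolding openE_def by blast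
      obtain e' where e': "e' \<in> B" "coset S e' \<subseteq> V" using V S unfolding openE_def by blast
      obtain e'' where e'': "e'' \<in> B" "e'' \<subseteq> e \<inter> e'" using base_directed[OF e(1) e'(1)] by blast
      have "coset S e'' \<subseteq> U \<inter> V"
        using coset_mono[of e'' e S] coset_mono[of e'' e' S] e(2) e'(2) e''(2) by blast
      thus ?thesis using e''(1) by blast
    qed
    thus ?thesis using U unfolding openE_def by blast
  qed
  have union: "openE (\<Union>K)" if K: "\<forall>U\<in>K. openE U" for K
  proof -
    have "\<exists>e\<in>B. coset S e \<subseteq> \<Union>K" if S: "S \<in> \<Union>K" for S
    proof -
      obtain U where U: "U \<in> K" "S \<in> U" using S by blast
      obtain e where "e \<in> B" "coset S e \<subseteq> U" using K U unfolding openE_def by blast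
      thus ?thesis using U(1) by blast
    qed
    thus ?thesis using K unfolding openE_def by blast
  qed
  show ?thesis unfolding istopology_def by (simp add: inter union)
qed

lemma openin_TE: "openin TE U \<longleftrightarrow> U \<subseteq> Fin \<and> (\<forall>S\<in>U. \<exists>e\<in>B. coset S e \<subseteq> U)"
  unfolding TE_def using istopology_openE openE_def by simp

lemma topspace_TE: "topspace TE = Fin"
proof -
  obtain e0 where "e0 \<in> B" using base_nonempty by blast
  hence "openin TE Fin" unfolding openin_TE using coset_Fin by blast
  moreover have "topspace TE \<subseteq> Fin" using openin_topspace[of TE] unfolding openin_TE by blast
  ultimately show ?thesis using openin_subset[of TE Fin] by blast
qed

lemma coset_open:
  assumes "S \<in> Fin" "e \<in> B"
  shows "openin TE (coset S e)"
  unfolding openin_TE using coset_Fin[OF assms(1)] coset_coset[of _ S e] assms(2) by blast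

lemma even_sets_open: "e \<in> B \<Longrightarrow> openin TE (even_sets Y e)"
  using coset_open[of "{}" e] unfolding coset_def by (simp add: Fin_def)

lemma continuous_map_into_TE:
  assumes maps: "\<And>a S. a \<in> topspace R \<Longrightarrow> S \<in> Fin \<Longrightarrow> f (a, S) \<in> Fin"
    and nearby: "\<And>a S e. a \<in> topspace R \<Longrightarrow> S \<in> Fin \<Longrightarrow> e \<in> B \<Longrightarrow>
       \<exists>U. \<exists>d\<in>B. openin R U \<and> a \<in> U \<and> (\<forall>b\<in>U. \<forall>S'\<in>coset S d. f (b, S') \<in> coset (f (a, S)) e)"
  shows "continuous_map (prod_topology R TE) TE f"
  unfolding continuous_map_def
proof (intro conjI allI impI)
  show "f \<in> topspace (prod_topology R TE) \<rightarrow> topspace TE"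
    using maps by (auto simp: topspace_TE)
  fix W assume W: "openin TE W"
  let ?P = "{p \<in> topspace (prod_topology R TE). f p \<in> W}"
  have "\<exists>U V. openin R U \<and> openin TE V \<and> a \<in> U \<and> S \<in> V \<and> U \<times> V \<subseteq> ?P"
    if p: "(a, S) \<in> ?P" for a S
  proof -
    have aS: "a \<in> topspace R" "S \<in> Fin" using p by (auto simp: topspace_TE)
    obtain e where e: "e \<in> B" "coset (f (a, S)) e \<subseteq> W" using W p unfolding openin_TE by blast
    obtain U d where Ud: "d \<in> B" "openin R U" "a \<in> U"
      "\<forall>b\<in>U. \<forall>S'\<in>coset S d. f (b, S') \<in> coset (f (a, S)) e"
      using nearby[OF aS e(1)] by blast
    have "U \<times> coset S d \<subseteq> ?P"
    proof
      fix p assume "p \<in> U \<times> coset S d"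
      then obtain b S' where p: "p = (b, S')" and b: "b \<in> U" and S': "S' \<in> coset S d" by blast
      have "b \<in> topspace R" "S' \<in> Fin" using openin_subset[OF Ud(2)] b coset_Fin[OF aS(2)] S' by auto
      moreover have "f (b, S') \<in> W" using Ud(4) e(2) b S' by blast
      ultimately show "p \<in> ?P" using p by (simp add: topspace_TE)
    qed
    show ?thesis
    proof (intro exI conjI)
      show "openin R U" "a \<in> U" using Ud(2,3) .
      show "openin TE (coset S d)" using coset_open[OF aS(2) Ud(1)] .
      show "S \<in> coset S d" by (rule coset_mem)
    qed fact
  qed
  thus "openin (prod_topology R TE) ?P" unfolding openin_prod_topology_alt by blast
qed

lemma comm_group_E: "comm_group E"
proof (rule comm_groupI)
  show "x \<in> carrier E \<Longrightarrow> \<exists>y\<in>carrier E. y \<otimes>\<^bsub>E\<^esub> x = \<one>\<^bsub>E\<^esub>" for x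
    by (intro bexI[of _ x]) auto
  show "x \<otimes>\<^bsub>E\<^esub> y \<otimes>\<^bsub>E\<^esub> z = x \<otimes>\<^bsub>E\<^esub> (y \<otimes>\<^bsub>E\<^esub> z)" for x y z
    by (simp add: sd_assoc)
  show "x \<otimes>\<^bsub>E\<^esub> y = y \<otimes>\<^bsub>E\<^esub> x" for x y
    by (simp add: sd_comm[of x y])
  show "\<one>\<^bsub>E\<^esub> \<in> carrier E" by (simp add: Fin_def)
qed (auto simp: sd_Fin)

lemma group_E: "group E"
  using comm_group_E comm_group.axioms(2) by blast

lemma inv_E: "S \<in> Fin \<Longrightarrow> inv\<^bsub>E\<^esub> S = S"
  by (rule group.inv_equality[OF group_E]) auto

lemma boolean_group_E: "boolean_group E"
  unfolding boolean_group_def using comm_group_E by auto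

lemma topological_group_E: "topological_group E TE"
  unfolding topological_group_def
proof (intro conjI)
  show "continuous_map TE TE (\<lambda>g. inv\<^bsub>E\<^esub> g)"
    by (rule continuous_map_eq[OF continuous_map_id]) (simp add: topspace_TE inv_E)
  have "continuous_map (prod_topology TE TE) TE (\<lambda>(S, S'). sd S S')"
  proof (rule continuous_map_into_TE)
    fix S0 S e assume "S0 \<in> topspace TE" "S \<in> Fin" "e \<in> B"
    hence "openin TE (coset S0 e)" using coset_open by (simp add: topspace_TE)
    thus "\<exists>U. \<exists>d\<in>B. openin TE U \<and> S0 \<in> U \<and>
            (\<forall>b\<in>U. \<forall>S'\<in>coset S d. (\<lambda>(S, S'). sd S S') (b, S') \<in> coset ((\<lambda>(S, S'). sd S S') (S0, S)) e)"
      using \<open>e \<in> B\<close> coset_mem[of S0 e] coset_sd[of _ S0 e _ S]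
      by (intro exI[of _ "coset S0 e"] bexI[of _ e]) auto
  qed (auto simp: topspace_TE sd_Fin)
  thus "continuous_map (prod_topology TE TE) TE (\<lambda>(g, h). g \<otimes>\<^bsub>E\<^esub> h)" by simp
qed (simp_all add: group_E topspace_TE)

text \<open>The even subgroups are open, so they witness non-archimedeanity.\<close>
lemma non_archimedean_E: "non_archimedean_group E TE"
  unfolding non_archimedean_group_def
proof (intro allI impI)
  fix U assume "openin TE U \<and> \<one>\<^bsub>E\<^esub> \<in> U"
  then obtain e where e: "e \<in> B" "coset {} e \<subseteq> U" unfolding openin_TE by force
  have "subgroup (even_sets Y e) E"
  proof (rule subgroup.intro)
    show "x \<in> even_sets Y e \<Longrightarrow> inv\<^bsub>E\<^esub> x \<in> even_sets Y e" for x
      using inv_E even_sets_Fin by (metis subsetD)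
  qed (use even_sets_Fin even_sets_sd even_sets_empty in auto)
  moreover have "even_sets Y e \<subseteq> U" using e(2) unfolding coset_def by simp
  ultimately show "\<exists>H. subgroup H E \<and> openin TE H \<and> H \<subseteq> U"
    using even_sets_open[OF e(1)] by blast
qed

lemma finite_separated:
  assumes "finite D" "D \<subseteq> Y"
  shows "\<exists>e\<in>B. separated_by e D"
proof -
  have "\<exists>e\<in>B. \<forall>(x, y)\<in>P. x \<noteq> y \<longrightarrow> (x, y) \<notin> e" if "finite P" "P \<subseteq> Y \<times> Y" for P
    using that
  proof (induction P rule: finite_induct)
    case empty
    then show ?case using base_nonempty by blast
  next
    case (insert p P)
    then obtain e where e: "e \<in> B" "\<forall>(x, y)\<in>P. x \<noteq> y \<longrightarrow> (x, y) \<notin> e" by blast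
    obtain x y where p: "p = (x, y)" "x \<in> Y" "y \<in> Y" using insert.prems by auto
    show ?case
    proof (cases "x = y")
      case True
      then show ?thesis using e p by auto
    next
      case False
      then obtain e' where "e' \<in> B" "(x, y) \<notin> e'" using base_separating p by blast
      moreover obtain e'' where "e'' \<in> B" "e'' \<subseteq> e \<inter> e'" using base_directed e(1) calculation by blast
      ultimately show ?thesis using e(2) p by (intro bexI[of _ e'']) auto
    qed
  qed
  from this[of "D \<times> D"] assms show ?thesis unfolding separated_by_def by auto
qed

lemma Hausdorff_E: "Hausdorff_space TE"
  unfolding Hausdorff_space_def topspace_TE
proof (intro allI impI)
  fix S S' assume h: "S \<in> Fin \<and> S' \<in> Fin \<and> S \<noteq> S'"
  let ?D = "sd S S'"
  have D: "finite ?D" "?D \<subseteq> Y" "?D \<noteq> {}" using h unfolding Fin_def sd_def by auto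
  obtain e where e: "e \<in> B" "separated_by e ?D" using finite_separated[OF D(1,2)] by blast
  have odd: "?D \<notin> even_sets Y e" using separated_not_even[OF base_equiv[OF e(1)] D(2) e(2) D(3)] .
  have "disjnt (coset S e) (coset S' e)"
    unfolding disjnt_def
  proof (rule equals0I)
    fix R assume "R \<in> coset S e \<inter> coset S' e"
    hence "sd S R \<in> even_sets Y e" "sd S' R \<in> even_sets Y e" by (simp_all add: coset_iff)
    hence "sd (sd S R) (sd S' R) \<in> even_sets Y e" by (rule even_sets_sd)
    moreover have "sd (sd S R) (sd S' R) = ?D" unfolding sd_def by auto
    ultimately show False using odd by simp
  qed
  moreover have "openin TE (coset S e)" "openin TE (coset S' e)" using coset_open h e(1) by auto
  ultimately show "\<exists>U V. openin TE U \<and> openin TE V \<and> S \<in> U \<and> S' \<in> V \<and> disjnt U V"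
    using coset_mem[of S e] coset_mem[of S' e] by blast
qed

lemma group_G: "group G"
  using topological_group unfolding topological_group_def by auto

lemma topspace_T: "topspace T = carrier G"
  using topological_group unfolding topological_group_def by auto

lemma rho_closed: "g \<in> carrier G \<Longrightarrow> x \<in> Y \<Longrightarrow> \<rho> g x \<in> Y"
  using action unfolding group_action_on_def by auto

lemma rho_one: "x \<in> Y \<Longrightarrow> \<rho> \<one>\<^bsub>G\<^esub> x = x"
  using action unfolding group_action_on_def by blast

lemma rho_mult: "g \<in> carrier G \<Longrightarrow> h \<in> carrier G \<Longrightarrow> x \<in> Y \<Longrightarrow> \<rho> (g \<otimes>\<^bsub>G\<^esub> h) x = \<rho> g (\<rho> h x)"
  using action unfolding group_action_on_def by blast

lemma inj_rho:
  assumes g: "g \<in> carrier G"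
  shows "inj_on (\<rho> g) Y"
proof (rule inj_onI)
  fix x y assume xy: "x \<in> Y" "y \<in> Y" "\<rho> g x = \<rho> g y"
  have cancel: "\<rho> (inv\<^bsub>G\<^esub> g) (\<rho> g z) = z" if z: "z \<in> Y" for z
  proof -
    have "\<rho> (inv\<^bsub>G\<^esub> g) (\<rho> g z) = \<rho> (inv\<^bsub>G\<^esub> g \<otimes>\<^bsub>G\<^esub> g) z"
      using rho_mult[OF group.inv_closed[OF group_G g] g z] by simp
    also have "\<dots> = z" using rho_one[OF z] group.l_inv[OF group_G g] by simp
    finally show ?thesis .
  qed
  have "x = \<rho> (inv\<^bsub>G\<^esub> g) (\<rho> g x)" using cancel[OF xy(1)] by (rule sym)
  also have "\<dots> = \<rho> (inv\<^bsub>G\<^esub> g) (\<rho> g y)" using xy(3) by (rule arg_cong)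
  also have "\<dots> = y" using cancel[OF xy(2)] .
  finally show "x = y" .
qed

lemma tau_Fin: "g \<in> carrier G \<Longrightarrow> S \<in> Fin \<Longrightarrow> \<tau> g S \<in> Fin"
  unfolding Fin_def \<tau>_def using rho_closed by auto

lemma tau_one: "S \<in> Fin \<Longrightarrow> \<tau> \<one>\<^bsub>G\<^esub> S = S"
  unfolding \<tau>_def Fin_def using rho_one by force

lemma tau_mult:
  "g \<in> carrier G \<Longrightarrow> h \<in> carrier G \<Longrightarrow> S \<in> Fin \<Longrightarrow> \<tau> (g \<otimes>\<^bsub>G\<^esub> h) S = \<tau> g (\<tau> h S)"
  unfolding \<tau>_def Fin_def using rho_mult by (force simp: image_comp)

lemma tau_sd: "g \<in> carrier G \<Longrightarrow> S \<in> Fin \<Longrightarrow> A \<in> Fin \<Longrightarrow> \<tau> g (sd S A) = sd (\<tau> g S) (\<tau> g A)"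
  unfolding \<tau>_def Fin_def using image_sd[OF inj_rho] by blast

lemma tau_iso:
  assumes g: "g \<in> carrier G"
  shows "\<tau> g \<in> iso E E"
proof -
  have ig: "inv\<^bsub>G\<^esub> g \<in> carrier G" using group.inv_closed[OF group_G g] .
  have "\<tau> g \<in> hom E E"
    unfolding hom_def using tau_Fin[OF g] tau_sd[OF g] by auto
  moreover have "\<tau> (inv\<^bsub>G\<^esub> g) (\<tau> g S) = S" if "S \<in> Fin" for S
    using tau_mult[OF ig g that] tau_one[OF that] group.l_inv[OF group_G g] by simp
  moreover have "\<tau> g (\<tau> (inv\<^bsub>G\<^esub> g) S) = S" if "S \<in> Fin" for S
    using tau_mult[OF g ig that] tau_one[OF that] group.r_inv[OF group_G g] by simp
  ultimately show ?thesis
    unfolding iso_def using tau_Fin g ig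
    by (auto intro!: bij_betw_byWitness[of _ "\<tau> (inv\<^bsub>G\<^esub> g)"])
qed

text \<open>Moving \<open>S0\<close> by \<open>g\<close> instead of \<open>g0\<close> costs an even set by
  orbit continuity (\<open>S0\<close> is finite); moving the even part \<open>A\<close> costs an even set by
  equicontinuity.\<close>
lemma tau_maps_cosets:
  assumes g0: "g0 \<in> carrier G" and S0: "S0 \<in> Fin" and e: "e \<in> B"
  shows "\<exists>V. \<exists>d\<in>B. openin T V \<and> g0 \<in> V \<and> (\<forall>g\<in>V. \<forall>S\<in>coset S0 d. \<tau> g S \<in> coset (\<tau> g0 S0) e)"
proof -
  obtain d V1 where d: "d \<in> B" "openin T V1" "g0 \<in> V1"
    "\<forall>g\<in>V1. \<forall>x y. (x, y) \<in> d \<longrightarrow> (\<rho> g x, \<rho> g y) \<in> e"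
    using equicontinuous[OF e g0] by blast
  have S0Y: "finite S0" "S0 \<subseteq> Y" using S0 unfolding Fin_def by auto
  have sym_e: "sym e" using base_equiv[OF e] unfolding equiv_def by blast
  have near: "\<forall>x\<in>S0. \<exists>V. openin T V \<and> g0 \<in> V \<and> (\<forall>g\<in>V. (\<rho> g0 x, \<rho> g x) \<in> e)"
  proof
    fix x assume "x \<in> S0"
    then obtain V where "openin T V" "g0 \<in> V" "\<forall>g\<in>V. (\<rho> g x, \<rho> g0 x) \<in> e"
      using orbit_continuous[OF e g0] S0Y(2) by blast
    thus "\<exists>V. openin T V \<and> g0 \<in> V \<and> (\<forall>g\<in>V. (\<rho> g0 x, \<rho> g x) \<in> e)"
      using sym_e unfolding sym_def by blast
  qed
  have g0T: "g0 \<in> topspace T" using g0 topspace_T by simp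
  obtain V2 where V2: "openin T V2" "g0 \<in> V2" "\<forall>g\<in>V2. \<forall>x\<in>S0. (\<rho> g0 x, \<rho> g x) \<in> e"
    using finite_common_nbhd[OF S0Y(1) g0T, of "\<lambda>g x. (\<rho> g0 x, \<rho> g x) \<in> e"] near by blast
  have d_sub: "d \<subseteq> Y \<times> Y" using base_equiv[OF d(1)] unfolding equiv_def refl_on_def by blast
  have "\<tau> g S \<in> coset (\<tau> g0 S0) e" if g: "g \<in> V1 \<inter> V2" and S: "S \<in> coset S0 d" for g S
  proof -
    have gG: "g \<in> carrier G" using g d(2) openin_subset topspace_T by blast
    define A where "A = sd S0 S"
    have A: "A \<in> even_sets Y d" using S unfolding A_def coset_iff .
    have AF: "A \<in> Fin" using A even_sets_Fin by blast
    have moved: "sd (\<tau> g0 S0) (\<tau> g S0) \<in> even_sets Y e"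
      unfolding \<tau>_def
    proof (rule sd_images_even[OF sym_e S0Y(1)])
      show "inj_on (\<rho> g0) S0" "inj_on (\<rho> g) S0"
        using inj_on_subset[OF inj_rho S0Y(2)] g0 gG by auto
      show "\<rho> g0 ` S0 \<subseteq> Y" "\<rho> g ` S0 \<subseteq> Y" using rho_closed g0 gG S0Y(2) by auto
      show "\<forall>x\<in>S0. (\<rho> g0 x, \<rho> g x) \<in> e" using V2(3) g by blast
    qed
    have "\<rho> g ` Y \<subseteq> Y" using rho_closed[OF gG] by auto
    hence spread: "\<tau> g A \<in> even_sets Y e"
      unfolding \<tau>_def using even_sets_image[OF inj_rho[OF gG] _ d_sub _ A] d(4) g by blast
    have "S = sd S0 A" unfolding A_def by simp
    hence "\<tau> g S = sd (\<tau> g S0) (\<tau> g A)" using tau_sd[OF gG S0 AF] by simp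
    hence "sd (\<tau> g0 S0) (\<tau> g S) = sd (sd (\<tau> g0 S0) (\<tau> g S0)) (\<tau> g A)" by (simp add: sd_assoc)
    also have "\<dots> \<in> even_sets Y e" using moved spread by (rule even_sets_sd)
    finally show ?thesis unfolding coset_iff .
  qed
  moreover have "openin T (V1 \<inter> V2)" "g0 \<in> V1 \<inter> V2" using d V2 by auto
  ultimately show ?thesis using d(1) by blast
qed

lemma continuous_action_E: "continuous_action G T TE \<tau>"
  unfolding continuous_action_def
proof
  show "group_action_on G (topspace TE) \<tau>"
    unfolding group_action_on_def topspace_TE using tau_Fin tau_one tau_mult by blast
  show "continuous_map (prod_topology T TE) TE (\<lambda>(g, S). \<tau> g S)"
  proof (rule continuous_map_into_TE)
    fix g0 S0 e assume "g0 \<in> topspace T" "S0 \<in> Fin" "e \<in> B"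
    thus "\<exists>V. \<exists>d\<in>B. openin T V \<and> g0 \<in> V \<and>
            (\<forall>g\<in>V. \<forall>S\<in>coset S0 d. (\<lambda>(g, S). \<tau> g S) (g, S) \<in> coset ((\<lambda>(g, S). \<tau> g S) (g0, S0)) e)"
      using tau_maps_cosets topspace_T by simp
  qed (simp add: topspace_T tau_Fin)
qed

text \<open>The generators \<open>{y}\<close>, \<open>y \<in> Y\<close>, form a closed subset of \<open>E\<close>: a finite set that is not a
  generator has a basic neighbourhood free of generators, by \<open>separated_sd_singleton\<close>.\<close>
lemma closedin_generators: "closedin TE ((\<lambda>y. {y}) ` Y)"
proof -
  have "\<exists>e\<in>B. coset S e \<subseteq> Fin - (\<lambda>y. {y}) ` Y" if S: "S \<in> Fin - (\<lambda>y. {y}) ` Y" for S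
  proof -
    have SY: "finite S" "S \<subseteq> Y" using S unfolding Fin_def by auto
    obtain e where e: "e \<in> B" "separated_by e S" using finite_separated[OF SY] by blast
    have "S' \<notin> (\<lambda>y. {y}) ` Y" if S': "S' \<in> coset S e" for S'
    proof
      assume "S' \<in> (\<lambda>y. {y}) ` Y"
      then obtain z where z: "z \<in> Y" "S' = {z}" by blast
      then obtain c where "S = {c}"
        using separated_sd_singleton[OF base_equiv[OF e(1)] SY(2) e(2) z(1)] S' unfolding coset_iff by blast
      thus False using S SY(2) by auto
    qed
    thus ?thesis using e(1) coset_Fin S by blast
  qed
  thus ?thesis unfolding closedin_def topspace_TE openin_TE by (auto simp: Fin_def)
qed

text \<open>The right uniformity of \<open>E\<close>: since \<open>E\<close> is Boolean, \<open>S' S\<^sup>-\<^sup>1 = sd S' S\<close>.\<close>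
lemma right_group_uniformity_E:
  "right_group_uniformity E TE =
     {\<epsilon>. \<epsilon> \<subseteq> Fin \<times> Fin \<and> (\<exists>U. openin TE U \<and> {} \<in> U \<and>
          {(S, S'). S \<in> Fin \<and> S' \<in> Fin \<and> sd S' S \<in> U} \<subseteq> \<epsilon>)}"
  unfolding right_group_uniformity_def by (simp add: inv_E cong: conj_cong)

lemma generators_uniformly_close:
  assumes "\<epsilon> \<in> right_group_uniformity E TE"
  shows "\<exists>e\<in>B. \<forall>x y. (x, y) \<in> e \<longrightarrow> ({x}, {y}) \<in> \<epsilon>"
proof -
  obtain U where U: "openin TE U" "{} \<in> U" "{(S, S'). S \<in> Fin \<and> S' \<in> Fin \<and> sd S' S \<in> U} \<subseteq> \<epsilon>"
    using assms unfolding right_group_uniformity_E by blast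
  obtain e where e: "e \<in> B" "coset {} e \<subseteq> U" using U(1,2) unfolding openin_TE by blast
  have "({x}, {y}) \<in> \<epsilon>" if xy: "(x, y) \<in> e" for x y
  proof -
    have "x \<in> Y" "y \<in> Y" using base_equiv[OF e(1)] xy unfolding equiv_def refl_on_def by auto
    moreover have "sd {y} {x} \<in> U"
      using e(2) xy pair_even_iff[OF base_equiv[OF e(1)] calculation] unfolding coset_def by auto
    ultimately show ?thesis using U(3) by (auto simp: Fin_def)
  qed
  thus ?thesis using e(1) by blast
qed

lemma generators_uniformly_apart:
  assumes e: "e \<in> B"
  shows "\<exists>\<delta>\<in>right_group_uniformity E TE. \<forall>x\<in>Y. \<forall>y\<in>Y. ({x}, {y}) \<in> \<delta> \<longrightarrow> (x, y) \<in> e"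
proof -
  let ?\<delta> = "{(S, S'). S \<in> Fin \<and> S' \<in> Fin \<and> sd S' S \<in> even_sets Y e}"
  have "?\<delta> \<in> right_group_uniformity E TE"
    unfolding right_group_uniformity_E using even_sets_open[OF e] even_sets_empty by blast
  moreover have "(x, y) \<in> e" if "x \<in> Y" "y \<in> Y" "({x}, {y}) \<in> ?\<delta>" for x y
    using that pair_even_iff[OF base_equiv[OF e]] by auto
  ultimately show ?thesis by blast
qed

end

section \<open>Encoding the uniform space by singletons\<close>

text \<open>The group in the theorem has elements of type \<open>'x set set\<close>, so the construction is
  applied to the set of singletons \<open>{x}\<close>, \<open>x \<in> X\<close>; an entourage \<open>e\<close> on \<open>X\<close> is transported
  to the relation \<open>lift_rel e\<close> on singletons.\<close>
definition lift_rel :: "('x \<times> 'x) set \<Rightarrow> ('x set \<times> 'x set) set" where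
  "lift_rel e = {(s, t). \<exists>a b. s = {a} \<and> t = {b} \<and> (a, b) \<in> e}"

lemma lift_rel_iff [simp]: "({a}, {b}) \<in> lift_rel e \<longleftrightarrow> (a, b) \<in> e"
  unfolding lift_rel_def by auto

lemma equiv_lift_rel: "equiv X e \<Longrightarrow> equiv ((\<lambda>x. {x}) ` X) (lift_rel e)"
  unfolding equiv_def refl_on_def sym_def trans_def lift_rel_def by blast

lemma lift_rel_mono: "e \<subseteq> e' \<Longrightarrow> lift_rel e \<subseteq> lift_rel e'"
  unfolding lift_rel_def by blast

lemma equiv_entourage_below:
  assumes "non_archimedean_uniformity X \<mu>" "\<epsilon> \<in> \<mu>"
  obtains e where "e \<in> \<mu>" "e \<subseteq> \<epsilon>" "equiv X e"
  using assms unfolding non_archimedean_uniformity_def by blast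

lemma boolean_envelope_singletons:
  assumes tg: "topological_group G T"
    and un: "uniformity_on X \<mu>"
    and hs: "hausdorff_uniformity X \<mu>"
    and na: "non_archimedean_uniformity X \<mu>"
    and act: "continuous_action G T (uniform_topology X \<mu>) \<pi>"
    and pu: "pi_uniform G T X \<mu> \<pi>"
  shows "boolean_envelope G T ((\<lambda>x. {x}) ` X) (lift_rel ` {e \<in> \<mu>. equiv X e}) (\<lambda>g s. \<pi> g ` s)"
proof
  let ?B = "lift_rel ` {e \<in> \<mu>. equiv X e}"
  have topT: "topspace T = carrier G" using tg unfolding topological_group_def by auto
  have ga: "group_action_on G X \<pi>"
    using act topspace_uniform_topology[OF un] unfolding continuous_action_def by auto
  show "topological_group G T" by (rule tg)
  obtain \<epsilon> where "\<epsilon> \<in> \<mu>" using uniformity_onD(1)[OF un] by blast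
  then obtain e where "e \<in> \<mu>" "equiv X e" using equiv_entourage_below[OF na] by metis
  thus "?B \<noteq> {}" by blast
  show "equiv ((\<lambda>x. {x}) ` X) e'" if "e' \<in> ?B" for e'
    using that equiv_lift_rel by blast
  show "\<exists>e''\<in>?B. e'' \<subseteq> e \<inter> e'" if ee': "e \<in> ?B" "e' \<in> ?B" for e e'
  proof -
    obtain a b where ab: "a \<in> \<mu>" "b \<in> \<mu>" "e = lift_rel a" "e' = lift_rel b" using ee' by blast
    obtain c where "c \<in> \<mu>" "c \<subseteq> a \<inter> b" "equiv X c"
      using equiv_entourage_below[OF na uniformity_onD(3)[OF un ab(1,2)]] by metis
    thus ?thesis using ab lift_rel_mono[of c a] lift_rel_mono[of c b] by blast
  qed
  show "\<exists>e\<in>?B. (s, t) \<notin> e" if st: "s \<in> (\<lambda>x. {x}) ` X" "t \<in> (\<lambda>x. {x}) ` X" "s \<noteq> t" for s t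
  proof -
    obtain a b where ab: "a \<in> X" "b \<in> X" "s = {a}" "t = {b}" "a \<noteq> b" using st by blast
    then obtain \<epsilon> where "\<epsilon> \<in> \<mu>" "(a, b) \<notin> \<epsilon>" using hs unfolding hausdorff_uniformity_def by blast
    then obtain c where "c \<in> \<mu>" "c \<subseteq> \<epsilon>" "equiv X c" using equiv_entourage_below[OF na] by metis
    thus ?thesis using ab \<open>(a, b) \<notin> \<epsilon>\<close> by (intro bexI[of _ "lift_rel c"]) auto
  qed
  show "group_action_on G ((\<lambda>x. {x}) ` X) (\<lambda>g s. \<pi> g ` s)"
    using ga unfolding group_action_on_def by auto
  show "\<exists>V. openin T V \<and> g0 \<in> V \<and> (\<forall>g\<in>V. (\<pi> g ` s, \<pi> g0 ` s) \<in> e)"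
    if e: "e \<in> ?B" and g0: "g0 \<in> carrier G" and s: "s \<in> (\<lambda>x. {x}) ` X" for e g0 s
  proof -
    obtain c a where c: "c \<in> \<mu>" "equiv X c" "e = lift_rel c" and a: "a \<in> X" "s = {a}"
      using e s by blast
    obtain V where "openin T V" "g0 \<in> V" "\<forall>g\<in>V. (\<pi> g a, \<pi> g0 a) \<in> c"
      using orbit_map_locally_constant[OF un act topT c(1,2) g0 a(1)] by blast
    thus ?thesis using c(3) a(2) by auto
  qed
  show "\<exists>d\<in>?B. \<exists>V. openin T V \<and> g0 \<in> V \<and>
          (\<forall>g\<in>V. \<forall>s t. (s, t) \<in> d \<longrightarrow> (\<pi> g ` s, \<pi> g ` t) \<in> e)"
    if e: "e \<in> ?B" and g0: "g0 \<in> carrier G" for e g0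
  proof -
    obtain c where c: "c \<in> \<mu>" "equiv X c" "e = lift_rel c" using e by blast
    obtain \<delta> V where \<delta>V: "\<delta> \<in> \<mu>" "openin T V" "g0 \<in> V" "\<forall>(x, y)\<in>\<delta>. \<forall>g\<in>V. (\<pi> g x, \<pi> g y) \<in> c"
      using pu c(1) g0 unfolding pi_uniform_def by meson
    obtain d where d: "d \<in> \<mu>" "d \<subseteq> \<delta>" "equiv X d" using equiv_entourage_below[OF na \<delta>V(1)] by metis
    have "\<forall>g\<in>V. \<forall>s t. (s, t) \<in> lift_rel d \<longrightarrow> (\<pi> g ` s, \<pi> g ` t) \<in> e"
      using \<delta>V(4) d(2) c(3) unfolding lift_rel_def by fastforce
    thus ?thesis using d \<delta>V(2,3) by blast
  qed
qed

locale singleton_envelope =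
  boolean_envelope G T "(\<lambda>x. {x}) ` X" "lift_rel ` {e \<in> \<mu>. equiv X e}" "\<lambda>g s. \<pi> g ` s"
  for G :: "('g, 'm) monoid_scheme" and T :: "'g topology"
    and X :: "'x set" and \<mu> :: "('x \<times> 'x) set set" and \<pi> :: "'g \<Rightarrow> 'x \<Rightarrow> 'x" +
  assumes non_archimedean: "non_archimedean_uniformity X \<mu>"
begin

definition \<alpha> :: "'x \<Rightarrow> 'x set set" where
  "\<alpha> x = {{x}}"

lemma alpha_equivariant: "\<alpha> (\<pi> g x) = \<tau> g (\<alpha> x)"
  unfolding \<alpha>_def \<tau>_def by simp

lemma closedin_alpha_image: "closedin TE (\<alpha> ` X)"
proof -
  have "\<alpha> ` X = (\<lambda>y. {y}) ` ((\<lambda>x. {x}) ` X)" unfolding \<alpha>_def by auto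
  thus ?thesis using closedin_generators by simp
qed

text \<open>\<open>\<alpha>\<close> is a uniform embedding: the equivalence entourages of \<open>\<mu>\<close> correspond to the
  entourages of \<open>E\<close> restricted to the generators.\<close>
lemma uniform_embedding_alpha:
  "uniform_embedding X \<mu> (carrier E) (right_group_uniformity E TE) \<alpha>"
  unfolding uniform_embedding_def uniformly_continuous_map_def
proof (intro conjI ballI)
  show "inj_on \<alpha> X" unfolding \<alpha>_def inj_on_def by auto
  show "\<alpha> ` X \<subseteq> carrier E" unfolding \<alpha>_def by (auto simp: Fin_def)
  fix \<epsilon> assume "\<epsilon> \<in> right_group_uniformity E TE"
  then obtain c where c: "c \<in> \<mu>" "\<forall>s t. (s, t) \<in> lift_rel c \<longrightarrow> ({s}, {t}) \<in> \<epsilon>"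
    using generators_uniformly_close by blast
  hence "\<forall>x\<in>X. \<forall>y\<in>X. (x, y) \<in> c \<longrightarrow> (\<alpha> x, \<alpha> y) \<in> \<epsilon>" unfolding \<alpha>_def by simp
  thus "\<exists>\<delta>\<in>\<mu>. \<forall>x\<in>X. \<forall>y\<in>X. (x, y) \<in> \<delta> \<longrightarrow> (\<alpha> x, \<alpha> y) \<in> \<epsilon>" using c(1) by blast
next
  fix \<epsilon> assume "\<epsilon> \<in> \<mu>"
  then obtain c where c: "c \<in> \<mu>" "c \<subseteq> \<epsilon>" "equiv X c"
    using equiv_entourage_below[OF non_archimedean] by metis
  then obtain \<delta> where \<delta>: "\<delta> \<in> right_group_uniformity E TE"
    "\<forall>s\<in>(\<lambda>x. {x}) ` X. \<forall>t\<in>(\<lambda>x. {x}) ` X. ({s}, {t}) \<in> \<delta> \<longrightarrow> (s, t) \<in> lift_rel c"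
    using generators_uniformly_apart[of "lift_rel c"] by blast
  have "\<forall>x\<in>X. \<forall>y\<in>X. (\<alpha> x, \<alpha> y) \<in> \<delta> \<longrightarrow> (x, y) \<in> \<epsilon>"
    using \<delta>(2) c(2) unfolding \<alpha>_def by auto
  thus "\<exists>\<delta>\<in>right_group_uniformity E TE. \<forall>x\<in>X. \<forall>y\<in>X. (\<alpha> x, \<alpha> y) \<in> \<delta> \<longrightarrow> (x, y) \<in> \<epsilon>"
    using \<delta>(1) by blast
qed

end

theorem theorem6p5:
  fixes G :: "('g, 'm) monoid_scheme" and T :: "'g topology"
    and X :: "'x set" and \<mu> :: "('x \<times> 'x) set set" and \<pi> :: "'g \<Rightarrow> 'x \<Rightarrow> 'x"
  assumes "topological_group G T"
    and "uniformity_on X \<mu>"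
    and "hausdorff_uniformity X \<mu>"
    and "non_archimedean_uniformity X \<mu>"
    and "continuous_action G T (uniform_topology X \<mu>) \<pi>"
    and "pi_uniform G T X \<mu> \<pi>"
  shows "\<exists>(E :: 'x set set monoid) (TE :: 'x set set topology)
            (\<tau> :: 'g \<Rightarrow> 'x set set \<Rightarrow> 'x set set) (\<alpha> :: 'x \<Rightarrow> 'x set set).
           topological_group E TE \<and> boolean_group E \<and>
           Hausdorff_space TE \<and> non_archimedean_group E TE \<and>
           continuous_action G T TE \<tau> \<and>
           (\<forall>g\<in>carrier G. \<tau> g \<in> iso E E) \<and>
           (\<forall>g\<in>carrier G. \<forall>x\<in>X. \<alpha> (\<pi> g x) = \<tau> g (\<alpha> x)) \<and>
           uniform_embedding X \<mu> (carrier E) (right_group_uniformity E TE) \<alpha> \<and>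
           closedin TE (\<alpha> ` X)"
proof -
  interpret singleton_envelope G T X \<mu> \<pi>
    using boolean_envelope_singletons[OF assms] assms(4)
    by (simp add: singleton_envelope_def singleton_envelope_axioms_def)
  show ?thesis
  proof (intro exI conjI)
    show "topological_group E TE" by (rule topological_group_E)
    show "boolean_group E" by (rule boolean_group_E)
    show "Hausdorff_space TE" by (rule Hausdorff_E)
    show "non_archimedean_group E TE" by (rule non_archimedean_E)
    show "continuous_action G T TE \<tau>" by (rule continuous_action_E)
    show "\<forall>g\<in>carrier G. \<tau> g \<in> iso E E" using tau_iso by blast
    show "\<forall>g\<in>carrier G. \<forall>x\<in>X. \<alpha> (\<pi> g x) = \<tau> g (\<alpha> x)" using alpha_equivariant by blast
    show "uniform_embedding X \<mu> (carrier E) (right_group_uniformity E TE) \<alpha>"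
      by (rule uniform_embedding_alpha)
    show "closedin TE (\<alpha> ` X)" by (rule closedin_alpha_image)
  qed
qed

end
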